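(* Let $H=\big(\frac{S_k}{z^k}+\cdots+\frac{S_1}{z}+S_0+N_0\big)\frac{dz}{z}$ be an unramified HTL normal form of rank $n$ with spectral type $(\mathbf{m}_0\le_{\phi_0}\mathbf{m}_1\le_{\phi_1}\cdots\le_{\phi_{k-1}}\mathbf{m}_k,\ \sigma(\mathbf{m}_0))$. Let $\mathcal{I}\colon I_0,I_1,\dots,I_r$ be a partition of $\{0,1,\dots,k\}$ with $0\in I_0$, write $I_j=\{i_{[j,0]}<i_{[j,1]}<\cdots<i_{[j,k_j]}\}$, and let $\mathsf{c}=(c_0,\dots,c_r)\in\mathbb{C}^{r+1}$ have pairwise distinct entries and satisfy $\iota_{\mathcal{I}}(\mathsf{c})\in\mathbb{D}(H)$. Write the partial fraction decomposition $H(\iota_{\mathcal{I}}(\mathsf{c}))=\sum_{j=0}^r H_{\mathcal{I}}(\mathsf{c})_{z_{c_j}}$ with $H_{\mathcal{I}}(\mathsf{c})_{z_{c_j}}=\sum_{\nu=0}^{k_j}\frac{A^{[j]}_\nu}{z_{c_j}^{\nu+1}}dz_{c_j}$, $z_{c_j}=z-c_j$, $A^{[j]}_\nu\in M_n(\mathbb{C})$. Then each $H_{\mathcal{I}}(\mathsf{c})_{z_{c_j}}$ is an unramified HTL normal form, with spectral type \[(\mathbf{m}_{i_{[j,0]}}\le_{\phi_{i_{[j,0]}}^{i_{[j,1]}}}\mathbf{m}_{i_{[j,1]}}\le\cdots\le_{\phi^{i_{[j,k_j]}}_{i_{[j,k_j-1]}}}\mathbf{m}_{i_{[j,k_j]}},\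 \mathrm{triv})\quad (j=1,\dots,r),\] and \[(\mathbf{m}_{i_{[0,0]}}\le_{\phi_{i_{[0,0]}}^{i_{[0,1]}}}\mathbf{m}_{i_{[0,1]}}\le\cdots\le_{\phi^{i_{[0,k_0]}}_{i_{[0,k_0-1]}}}\mathbf{m}_{i_{[0,k_0]}},\ \sigma(\mathbf{m}_0))\quad (j=0).\]
   Context: An unramified HTL normal form is $H=\big(\sum_{i=1}^k S_iz^{-i}+S_0+N_0\big)\frac{dz}{z}$ with $S_i\in M_n(\mathbb{C})$ diagonal and $N_0$ nilpotent commuting with all $S_i$. Spectral type: for $i=0,\dots,k$ let $\mathbb{C}^n=\bigoplus_{j=1}^{m(i)}V_{\langle i,j\rangle}$ be the decomposition into simultaneous eigenspaces of $(S_i,S_{i+1},\dots,S_k)$ and $\mathbf{m}_i=(\dim V_{\langle i,1\rangle},\dots,\dim V_{\langle i,m(i)\rangle})$; $\phi_i\colon\{1,\dots,m(i)\}\to\{1,\dots,m(i+1)\}$ is the map with $V_{\langle i+1,j\rangle}=\bigoplus_{\mu\in\phi_i^{-1}(j)}V_{\langle i,\mu\rangle}$, and for $i<i'$, $\phi_i^{i'}=\phi_{i'-1}\circ\cdots\circ\phi_i$ (the refinement map from $\mathbf{m}_i$ to $\mathbf{m}_{i'}$). The signature $\sigma(\mathbf{m}_0)$ is the family, over $j=1,\dots,m(0)$, of sequences $(\dim V_{\langle0,j\rangle},\dim\mathrm{Im}N_j,\dim\mathrm{Im}N_j^2,\dots,\dim\mathrm{Im}N_j^{d_j-1})$ where $N_j=N_0|_{V_{\langle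 0,j\rangle}}$ and $N_j^{d_j}=0\neq N_j^{d_j-1}$; "triv" means the signature of a nilpotent part $0$. The spectral type is $(\mathbf{m}_0\le_{\phi_0}\cdots\le_{\phi_{k-1}}\mathbf{m}_k,\sigma(\mathbf{m}_0))$. Unfolding: for $\mathbf{c}=(c_0,\dots,c_k)\in\mathbb{C}^{k+1}$, $H(\mathbf{c})=\big(\frac{S_k}{(z-c_1)\cdots(z-c_k)}+\cdots+\frac{S_1}{z-c_1}+S_0+N_0\big)\frac{dz}{z-c_0}$. The set $\mathbb{D}(H)$: let $s^{(l)}_{\langle i,j\rangle}$ be the eigenvalue of $S_l$ on $V_{\langle i,j\rangle}$ ($i\le l\le k$); for $j\neq j'$ let $t=t_i(j,j')$ be the largest $l\in\{i,\dots,k\}$ with $s^{(l)}_{\langle i,j\rangle}\ne s^{(l)}_{\langle i,j'\rangle}$, and put $\alpha^*_{i;j,j'}(x_0,\dots,x_k)=\sum_{l=i}^{t}(s^{(l)}_{\langle i,j\rangle}-s^{(l)}_{\langle i,j'\rangle})\prod_{l<\nu\le t}(x_i-x_\nu)$. Then $\mathbb{D}(H)=\mathbb{C}^{k+1}\setminus\bigcup_{i=0}^{k-1}\bigcup_{1\le j<j'\le m(i)}\{\alpha^*_{i;j,j'}=0\}$. For the partition $\mathcal{I}$, $\iota_{\mathcal{I}}\colon\mathbb{C}^{r+1}\to\mathbb{C}^{k+1}$ sends $(a_0,\dots,a_r)$ to the vector whose $i$-th entry is $a_l$ for $i\in I_l$. *)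

theory Defs
  imports "HOL-Analysis.Analysis"
begin

type_synonym 'n cmat = "complex^'n^'n"

text \<open>An unramified HTL normal form of rank n = CARD('n), pole order k:
  data (k, S_0..S_k, N_0), standing for (sum_i S_i z^-i + S_0 + N_0) dz/z.\<close>

definition is_diag :: "'n::finite cmat \<Rightarrow> bool" where
  "is_diag A \<longleftrightarrow> (\<forall>i j. i \<noteq> j \<longrightarrow> A $ i $ j = 0)"

definition mat_nilpotent :: "'n::finite cmat \<Rightarrow> bool" where
  "mat_nilpotent N \<longleftrightarrow> (\<exists>p. ((\<lambda>B. N ** B) ^^ p) (mat 1) = 0)"

definition htl_nf :: "nat \<Rightarrow> (nat \<Rightarrow> 'n::finite cmat) \<Rightarrow> 'n cmat \<Rightarrow> bool" where
  "htl_nf k S N \<longleftrightarrow> (\<forall>i\<le>k. is_diag (S i)) \<and> mat_nilpotent N \<and>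
     (\<forall>i\<le>k. S i ** N = N ** S i)"

definition joint_eigsp :: "nat \<Rightarrow> (nat \<Rightarrow> 'n::finite cmat) \<Rightarrow> nat \<Rightarrow> (nat \<Rightarrow> complex) \<Rightarrow> (complex^'n) set" where
  "joint_eigsp k S i lam = {v. \<forall>l\<in>{i..k}. S l *v v = lam l *s v}"

definition joint_eigspaces :: "nat \<Rightarrow> (nat \<Rightarrow> 'n::finite cmat) \<Rightarrow> nat \<Rightarrow> (complex^'n) set set" where
  "joint_eigspaces k S i = {E. \<exists>lam. E = joint_eigsp k S i lam \<and> E \<noteq> {0}}"

definition nil_index :: "'n::finite cmat \<Rightarrow> (complex^'n) set \<Rightarrow> nat" where
  "nil_index N V = (LEAST d. \<forall>v\<in>V. (((*v) N) ^^ d) v = 0)"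

definition signature_seq :: "'n::finite cmat \<Rightarrow> (complex^'n) set \<Rightarrow> nat list" where
  "signature_seq N V = map (\<lambda>p. vec.dim ((\<lambda>v. (((*v) N) ^^ p) v) ` V)) [0..<nil_index N V]"

text \<open>Spectral type (m, phi, sig), with 0-based indices: level i has the eigenspaces
  V i 0, ..., V i (length (m i) - 1) (an enumeration of the simultaneous eigenspaces of
  (S_i,...,S_k)), m i ! j = dim V i j, phi i : level i \<rightarrow> level i+1 with
  V (i+1) j = direct sum of V i mu over phi i mu = j, and sig j the signature of N on V 0 j.\<close>
definition has_spectral_type ::
  "nat \<Rightarrow> (nat \<Rightarrow> 'n::finite cmat) \<Rightarrow> 'n cmat \<Rightarrow>
   (nat \<Rightarrow> nat list) \<Rightarrow> (nat \<Rightarrow> nat \<Rightarrow> nat) \<Rightarrow> (nat \<Rightarrow> nat list) \<Rightarrow> bool" where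
  "has_spectral_type k S N m phi sig \<longleftrightarrow>
    (\<exists>V :: nat \<Rightarrow> nat \<Rightarrow> (complex^'n) set.
      (\<forall>i\<le>k. bij_betw (V i) {..<length (m i)} (joint_eigspaces k S i) \<and>
              (\<forall>j<length (m i). m i ! j = vec.dim (V i j))) \<and>
      (\<forall>i<k. (\<forall>mu<length (m i). phi i mu < length (m (Suc i))) \<and>
             (\<forall>j<length (m (Suc i)).
                V (Suc i) j = vec.span (\<Union>mu\<in>{mu. mu < length (m i) \<and> phi i mu = j}. V i mu))) \<and>
      (\<forall>j<length (m 0). sig j = signature_seq N (V 0 j)))"

text \<open>Composed refinement maps: phi_comp phi i d = phi_{i}^{i+d}.\<close>
fun phi_comp :: "(nat \<Rightarrow> nat \<Rightarrow> nat) \<Rightarrow> nat \<Rightarrow> nat \<Rightarrow> nat \<Rightarrow> nat" where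
  "phi_comp phi i 0 = id"
| "phi_comp phi i (Suc d) = phi (i + d) \<circ> phi_comp phi i d"

definition is_joint_eigval :: "nat \<Rightarrow> (nat \<Rightarrow> 'n::finite cmat) \<Rightarrow> nat \<Rightarrow> (nat \<Rightarrow> complex) \<Rightarrow> bool" where
  "is_joint_eigval k S i lam \<longleftrightarrow> joint_eigsp k S i lam \<noteq> {0}"

definition alpha_star :: "nat \<Rightarrow> nat \<Rightarrow> (nat \<Rightarrow> complex) \<Rightarrow> (nat \<Rightarrow> complex) \<Rightarrow> (nat \<Rightarrow> complex) \<Rightarrow> complex" where
  "alpha_star k i lam mu x =
     (let t = Max {l\<in>{i..k}. lam l \<noteq> mu l} in
       (\<Sum>l=i..t. (lam l - mu l) * (\<Prod>nu\<in>{l<..t}. x i - x nu)))"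

definition D_set :: "nat \<Rightarrow> (nat \<Rightarrow> 'n::finite cmat) \<Rightarrow> (nat \<Rightarrow> complex) set" where
  "D_set k S = {x. \<forall>i<k. \<forall>lam mu. is_joint_eigval k S i lam \<and> is_joint_eigval k S i mu \<and>
        (\<exists>l\<in>{i..k}. lam l \<noteq> mu l) \<longrightarrow> alpha_star k i lam mu x \<noteq> 0}"

definition unfold_coeff :: "nat \<Rightarrow> (nat \<Rightarrow> 'n::finite cmat) \<Rightarrow> 'n cmat \<Rightarrow> (nat \<Rightarrow> complex) \<Rightarrow> complex \<Rightarrow> 'n cmat" where
  "unfold_coeff k S N x z =
     (\<Sum>l\<le>k. mat (1 / (\<Prod>nu\<le>l. (z - x nu))) ** S l) + mat (1 / (z - x 0)) ** N"

definition is_partition :: "nat \<Rightarrow> nat \<Rightarrow> (nat \<Rightarrow> nat set) \<Rightarrow> bool" where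
  "is_partition k r I \<longleftrightarrow> (\<forall>l\<le>r. I l \<noteq> {}) \<and>
     (\<forall>l\<le>r. \<forall>l'\<le>r. l \<noteq> l' \<longrightarrow> I l \<inter> I l' = {}) \<and> (\<Union>l\<le>r. I l) = {0..k}"

definition iota :: "nat \<Rightarrow> (nat \<Rightarrow> nat set) \<Rightarrow> (nat \<Rightarrow> complex) \<Rightarrow> nat \<Rightarrow> complex" where
  "iota r I c i = c (THE l. l \<le> r \<and> i \<in> I l)"

definition blk_idx :: "(nat \<Rightarrow> nat set) \<Rightarrow> nat \<Rightarrow> nat \<Rightarrow> nat" where
  "blk_idx I j nu = sorted_list_of_set (I j) ! nu"

definition blk_k :: "(nat \<Rightarrow> nat set) \<Rightarrow> nat \<Rightarrow> nat" where
  "blk_k I j = card (I j) - 1"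

end

(* Write x = iota(c). Entrywise, H(x) is a sum of terms S_l / prod_{nu <= l} (z - x_nu), and at c_j
   such a term has a pole of order p_l = #{nu <= l. nu in I_j} with leading coefficient S_l / Q_l(c_j),
   Q_l being the product of the remaining factors. So the principal part at c_j can be read off from
   the top order downwards: if all coefficients of order > nu + 1 vanish, A^[j]_nu is the sum of
   the S_l / Q_l(c_j) with p_l = nu + 1. Hence the A^[j]_nu are diagonal, apart from the contribution of N_0
   to A^[0]_0, and two coordinates p, q are separated by (A^[j]_nu, ..., A^[j]_{k_j}) iff they are
   separated by (S_{i_[j,nu]}, ..., S_k): if t is the largest level at which S_t separates p and q,
   the coefficient of order p_t is, up to the factor Q_t(c_j) <> 0, the value alpha*_{i;p,q}(x) for
   i = i_[j, p_t - 1], which is nonzero since x lies in D(H). Thus the block has at level nu the joint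
   eigenspaces of H at level i_[j,nu], and its spectral type is the corresponding subsequence. *)

theory Submission
  imports Defs
begin

section \<open>Pole orders and principal parts\<close>

definition pole_order :: "(nat \<Rightarrow> complex) \<Rightarrow> complex \<Rightarrow> nat \<Rightarrow> nat" where
  "pole_order x a l = card {mu. mu \<le> l \<and> x mu = a}"

definition cofactor :: "(nat \<Rightarrow> complex) \<Rightarrow> complex \<Rightarrow> nat \<Rightarrow> complex \<Rightarrow> complex" where
  "cofactor x a l z = (\<Prod>mu | mu \<le> l \<and> x mu \<noteq> a. z - x mu)"

lemma prod_eq_pole_power_cofactor:
  "(\<Prod>mu\<le>l. z - x mu) = (z - a) ^ pole_order x a l * cofactor x a l z"
proof -
  have "(\<Prod>mu\<le>l. z - x mu) =
      (\<Prod>mu\<in>{..l} \<inter> {mu. x mu = a}. z - x mu) * (\<Prod>mu\<in>{..l} - {mu. x mu = a}. z - x mu)"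
    by (rule prod.Int_Diff) simp
  also have "{..l} - {mu. x mu = a} = {mu. mu \<le> l \<and> x mu \<noteq> a}" by auto
  also have "{..l} \<inter> {mu. x mu = a} = {mu. mu \<le> l \<and> x mu = a}" by auto
  finally have "(\<Prod>mu\<le>l. z - x mu) =
      (\<Prod>mu | mu \<le> l \<and> x mu = a. z - x mu) * cofactor x a l z"
    unfolding cofactor_def .
  also have "(\<Prod>mu | mu \<le> l \<and> x mu = a. z - x mu) = (z - a) ^ pole_order x a l"
    unfolding pole_order_def by simp
  finally show ?thesis .
qed

lemma cofactor_nonzero: "cofactor x a l a \<noteq> 0"
  unfolding cofactor_def by (auto simp: prod_zero_iff)

lemma pole_order_mono: "l \<le> l' \<Longrightarrow> pole_order x a l \<le> pole_order x a l'"
  unfolding pole_order_def by (rule card_mono) auto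

lemma no_pole_between:
  assumes "pole_order x a l' \<le> pole_order x a l" and "nu \<in> {l<..l'}"
  shows "x nu \<noteq> a"
proof
  assume "x nu = a"
  then have "nu \<in> {mu. mu \<le> l' \<and> x mu = a} - {mu. mu \<le> l \<and> x mu = a}"
    using assms(2) by auto
  moreover have "{mu. mu \<le> l \<and> x mu = a} \<subseteq> {mu. mu \<le> l' \<and> x mu = a}"
    using assms(2) by auto
  ultimately have "{mu. mu \<le> l \<and> x mu = a} \<subset> {mu. mu \<le> l' \<and> x mu = a}"
    by blast
  then have "pole_order x a l < pole_order x a l'"
    unfolding pole_order_def by (rule psubset_card_mono[rotated]) simp
  then show False using assms(1) by simp
qed

lemma cofactor_split:
  assumes "l \<le> l'" and "\<forall>nu\<in>{l<..l'}. x nu \<noteq> a"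
  shows "cofactor x a l' z = cofactor x a l z * (\<Prod>nu\<in>{l<..l'}. z - x nu)"
proof -
  have "{mu. mu \<le> l' \<and> x mu \<noteq> a} = {mu. mu \<le> l \<and> x mu \<noteq> a} \<union> {l<..l'}"
    using assms by auto
  then show ?thesis
    unfolding cofactor_def by (simp only:) (rule prod.union_disjoint, auto)
qed

lemma cofactor_mult_sum:
  assumes "i \<le> t" and "\<forall>nu\<in>{i<..t}. x nu \<noteq> a"
  shows "cofactor x a t a * (\<Sum>l=i..t. d l / cofactor x a l a) =
    (\<Sum>l=i..t. d l * (\<Prod>nu\<in>{l<..t}. a - x nu))"
  unfolding sum_distrib_left
proof (rule sum.cong[OF refl])
  fix l assume "l \<in> {i..t}"
  then have "cofactor x a t a = cofactor x a l a * (\<Prod>nu\<in>{l<..t}. a - x nu)"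
    using assms by (intro cofactor_split) auto
  then show "cofactor x a t a * (d l / cofactor x a l a) = d l * (\<Prod>nu\<in>{l<..t}. a - x nu)"
    using cofactor_nonzero[of x a l] by simp
qed

lemma pole_order_0: "pole_order x a 0 = (if x 0 = a then 1 else 0)"
proof -
  have "{mu. mu \<le> 0 \<and> x mu = a} = (if x 0 = a then {0} else {})" by auto
  then show ?thesis unfolding pole_order_def by (simp only:) simp
qed

lemma cofactor_0: "cofactor x a 0 z = (if x 0 = a then 1 else z - x 0)"
proof -
  have "{mu. mu \<le> 0 \<and> x mu \<noteq> a} = (if x 0 = a then {} else {0})" by (auto intro: gr0I)
  then show ?thesis unfolding cofactor_def by (simp only:) simp
qed

lemma tendsto_pole_term:
  assumes "pole_order x a l \<le> Suc m"
  shows "((\<lambda>z. d * (z - a) ^ Suc m / (\<Prod>mu\<le>l. z - x mu)) \<longlongrightarrow>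
           (if pole_order x a l = Suc m then d / cofactor x a l a else 0)) (at a)"
proof -
  define f where "f z = d * (z - a) ^ (Suc m - pole_order x a l) / cofactor x a l z" for z
  have "isCont f a"
    using cofactor_nonzero[of x a l] unfolding f_def cofactor_def by (intro continuous_intros) auto
  then have "(f \<longlongrightarrow> f a) (at a)" by (simp add: isCont_def)
  moreover have "f a = (if pole_order x a l = Suc m then d / cofactor x a l a else 0)"
    using assms by (simp add: f_def)
  moreover have "f z = d * (z - a) ^ Suc m / (\<Prod>mu\<le>l. z - x mu)" if "z \<noteq> a" for z
  proof -
    have "(z - a) ^ Suc m = (z - a) ^ (Suc m - pole_order x a l) * (z - a) ^ pole_order x a l"
      using assms by (simp flip: power_add)
    then show ?thesis
      using that by (simp add: f_def prod_eq_pole_power_cofactor[of z x l a])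
  qed
  then have "\<forall>\<^sub>F z in at a. f z = d * (z - a) ^ Suc m / (\<Prod>mu\<le>l. z - x mu)"
    by (auto simp: eventually_at_filter)
  ultimately show ?thesis by (auto intro: Lim_transform_eventually)
qed

definition unfold_scalar ::
  "nat \<Rightarrow> (nat \<Rightarrow> complex) \<Rightarrow> (nat \<Rightarrow> complex) \<Rightarrow> complex \<Rightarrow> complex \<Rightarrow> complex" where
  "unfold_scalar k x d dN z = (\<Sum>l\<le>k. d l / (\<Prod>nu\<le>l. z - x nu)) + dN / (z - x 0)"

definition principal_parts ::
  "nat \<Rightarrow> (nat \<Rightarrow> nat) \<Rightarrow> (nat \<Rightarrow> complex) \<Rightarrow> (nat \<Rightarrow> nat \<Rightarrow> complex) \<Rightarrow> complex \<Rightarrow> complex" where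
  "principal_parts r K c b z = (\<Sum>j\<le>r. \<Sum>nu\<le>K j. b j nu / (z - c j) ^ (nu + 1))"

lemma unfold_scalar_diff:
  "unfold_scalar k x (\<lambda>l. d l - d' l) (dN - dN') z = unfold_scalar k x d dN z - unfold_scalar k x d' dN' z"
  by (simp add: unfold_scalar_def sum_subtractf diff_divide_distrib)

lemma principal_parts_diff:
  "principal_parts r K c (\<lambda>j nu. b j nu - b' j nu) z = principal_parts r K c b z - principal_parts r K c b' z"
  by (simp add: principal_parts_def sum_subtractf diff_divide_distrib)

lemma tendsto_unfold_scalar:
  assumes "\<forall>l\<le>k. Suc m < pole_order x a l \<longrightarrow> d l = 0"
  shows "((\<lambda>z. (z - a) ^ Suc m * unfold_scalar k x d dN z) \<longlongrightarrow>
     (\<Sum>l\<le>k. if pole_order x a l = Suc m then d l / cofactor x a l a else 0) +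
     (if x 0 = a \<and> m = 0 then dN else 0)) (at a)"
proof -
  have "((\<lambda>z. d l * (z - a) ^ Suc m / (\<Prod>nu\<le>l. z - x nu)) \<longlongrightarrow>
      (if pole_order x a l = Suc m then d l / cofactor x a l a else 0)) (at a)" if "l \<le> k" for l
    using assms that tendsto_pole_term[of x a l m "d l"] by (cases "Suc m < pole_order x a l") auto
  moreover have "((\<lambda>z. dN * (z - a) ^ Suc m / (\<Prod>nu\<le>0. z - x nu)) \<longlongrightarrow>
      (if x 0 = a \<and> m = 0 then dN else 0)) (at a)"
    using tendsto_pole_term[of x a 0 m dN] by (cases "x 0 = a") (auto simp: pole_order_0 cofactor_0)
  moreover have "(\<lambda>z. (z - a) ^ Suc m * unfold_scalar k x d dN z) =
    (\<lambda>z. (\<Sum>l\<le>k. d l * (z - a) ^ Suc m / (\<Prod>nu\<le>l. z - x nu)) +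
         dN * (z - a) ^ Suc m / (\<Prod>nu\<le>0. z - x nu))"
    by (auto simp: unfold_scalar_def sum_distrib_left distrib_left mult_ac)
  ultimately show ?thesis by (simp only:) (intro tendsto_add tendsto_sum, auto)
qed

lemma tendsto_principal_parts:
  assumes inj: "inj_on c {..r}" and j: "j \<le> r" and m: "m \<le> K j"
    and b: "\<forall>nu. m < nu \<and> nu \<le> K j \<longrightarrow> b j nu = 0"
  shows "((\<lambda>z. (z - c j) ^ Suc m * principal_parts r K c b z) \<longlongrightarrow> b j m) (at (c j))"
proof -
  define T where "T = (\<lambda>j' nu z.
      if j' = j then (if nu \<le> m then (z - c j) ^ (m - nu) * b j nu else 0)
      else (z - c j) ^ Suc m * b j' nu / (z - c j') ^ (nu + 1))"
  define F where "F z = (\<Sum>j'\<le>r. \<Sum>nu\<le>K j'. T j' nu z)" for z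
  have F_eq: "F z = (z - c j) ^ Suc m * principal_parts r K c b z" if z: "z \<noteq> c j" for z
    unfolding principal_parts_def F_def sum_distrib_left
  proof (intro sum.cong refl)
    fix j' nu assume nu: "nu \<in> {..K j'}"
    show "T j' nu z = (z - c j) ^ Suc m * (b j' nu / (z - c j') ^ (nu + 1))"
    proof (cases "j' = j \<and> nu \<le> m")
      case True
      then have "(z - c j) ^ Suc m = (z - c j) ^ (m - nu) * (z - c j) ^ (nu + 1)"
        by (simp flip: power_add)
      then show ?thesis using True z by (simp add: T_def)
    qed (use b nu in \<open>auto simp: T_def\<close>)
  qed
  have "isCont (T j' nu) (c j)" if "j' \<le> r" for j' nu
  proof (cases "j' = j")
    case False
    then have "c j' \<noteq> c j" using inj j that by (auto dest: inj_onD)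
    then have "isCont (\<lambda>z. (z - c j) ^ Suc m * b j' nu / (z - c j') ^ (nu + 1)) (c j)"
      by (intro continuous_intros) auto
    moreover have "T j' nu = (\<lambda>z. (z - c j) ^ Suc m * b j' nu / (z - c j') ^ (nu + 1))"
      using False by (simp add: T_def fun_eq_iff)
    ultimately show ?thesis by simp
  qed (cases "nu \<le> m", simp_all add: T_def)
  then have "isCont F (c j)" unfolding F_def by (intro continuous_intros) auto
  moreover have "F (c j) = b j m"
  proof -
    have "T j' nu (c j) = (if j' = j then (if nu = m then b j m else 0) else 0)" for j' nu
      by (simp add: T_def)
    moreover have "(\<Sum>nu\<le>K j'. if j' = j then if nu = m then b j m else 0 else 0) =
        (if j' = j then b j m else 0)" for j'
      using m by (cases "j' = j") auto
    ultimately show ?thesis using j by (simp add: F_def)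
  qed
  ultimately have "(F \<longlongrightarrow> b j m) (at (c j))" by (simp add: isCont_def)
  moreover have "\<forall>\<^sub>F z in at (c j). F z = (z - c j) ^ Suc m * principal_parts r K c b z"
    using F_eq by (auto simp: eventually_at_filter)
  ultimately show ?thesis by (rule Lim_transform_eventually)
qed

lemma principal_part_coeff:
  assumes inj: "inj_on c {..r}" and j: "j \<le> r"
    and pf: "\<And>z. (\<forall>j'\<le>r. z \<noteq> c j') \<Longrightarrow> unfold_scalar k x d dN z = principal_parts r K c b z"
    and m: "m \<le> K j" and b: "\<forall>nu. m < nu \<and> nu \<le> K j \<longrightarrow> b j nu = 0"
    and d: "\<forall>l\<le>k. Suc m < pole_order x (c j) l \<longrightarrow> d l = 0"
  shows "b j m = (\<Sum>l\<le>k. if pole_order x (c j) l = Suc m then d l / cofactor x (c j) l (c j) else 0)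
           + (if x 0 = c j \<and> m = 0 then dN else 0)"
proof -
  have "\<forall>\<^sub>F z in at (c j). \<forall>j'\<in>{..r}. z \<noteq> c j'"
    by (intro eventually_ball_finite ballI eventually_neq_at_within) simp
  then have "\<forall>\<^sub>F z in at (c j). (z - c j) ^ Suc m * principal_parts r K c b z =
      (z - c j) ^ Suc m * unfold_scalar k x d dN z"
    by eventually_elim (simp add: pf)
  moreover have "((\<lambda>z. (z - c j) ^ Suc m * principal_parts r K c b z) \<longlongrightarrow> b j m) (at (c j))"
    by (rule tendsto_principal_parts) (fact inj j m b)+
  ultimately have "((\<lambda>z. (z - c j) ^ Suc m * unfold_scalar k x d dN z) \<longlongrightarrow> b j m) (at (c j))"
    by (rule Lim_transform_eventually[rotated])
  then show ?thesis
    using tendsto_unfold_scalar[OF d] by (rule tendsto_unique[rotated]) simp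
qed

section \<open>Diagonal matrices and joint eigenspaces\<close>

lemma mat_mult_nth: "(mat a ** (M::'n::finite cmat)) $ p $ q = a * M $ p $ q"
proof -
  have "(mat a ** M) $ p $ q = (\<Sum>k\<in>UNIV. (if p = k then a else 0) * M $ k $ q)"
    by (simp add: matrix_matrix_mult_def mat_def)
  also have "\<dots> = (\<Sum>k\<in>UNIV. if k = p then a * M $ k $ q else 0)"
    by (intro sum.cong) auto
  finally show ?thesis by (simp add: sum.delta)
qed

lemma diag_mult_nth:
  assumes "is_diag D"
  shows "(D ** (M::'n::finite cmat)) $ p $ q = D $ p $ p * M $ p $ q"
proof -
  have "(D ** M) $ p $ q = (\<Sum>k\<in>UNIV. D $ p $ k * M $ k $ q)"
    by (simp add: matrix_matrix_mult_def)
  also have "\<dots> = (\<Sum>k\<in>UNIV. if k = p then D $ p $ p * M $ k $ q else 0)"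
    using assms by (intro sum.cong) (auto simp: is_diag_def)
  finally show ?thesis by (simp add: sum.delta)
qed

lemma mult_diag_nth:
  assumes "is_diag D"
  shows "((M::'n::finite cmat) ** D) $ p $ q = M $ p $ q * D $ q $ q"
proof -
  have "(M ** D) $ p $ q = (\<Sum>k\<in>UNIV. M $ p $ k * D $ k $ q)"
    by (simp add: matrix_matrix_mult_def)
  also have "\<dots> = (\<Sum>k\<in>UNIV. if k = q then M $ p $ k * D $ q $ q else 0)"
    using assms by (intro sum.cong) (auto simp: is_diag_def)
  finally show ?thesis by (simp add: sum.delta)
qed

lemma diag_mult_vec_nth:
  assumes "is_diag D"
  shows "((D::'n::finite cmat) *v v) $ p = D $ p $ p * v $ p"
proof -
  have "(D *v v) $ p = (\<Sum>k\<in>UNIV. D $ p $ k * v $ k)"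
    by (simp add: matrix_vector_mult_def)
  also have "\<dots> = (\<Sum>k\<in>UNIV. if k = p then D $ p $ p * v $ k else 0)"
    using assms by (intro sum.cong) (auto simp: is_diag_def)
  finally show ?thesis by (simp add: sum.delta)
qed

lemma joint_eigsp_diag:
  assumes "\<forall>l\<in>{i..k}. is_diag (D l)"
  shows "v \<in> joint_eigsp k D i lam \<longleftrightarrow> (\<forall>p. v $ p \<noteq> 0 \<longrightarrow> (\<forall>l\<in>{i..k}. D l $ p $ p = lam l))"
  using assms by (auto simp: joint_eigsp_def vec_eq_iff diag_mult_vec_nth)

lemma axis_mem_joint_eigsp_diag:
  assumes "\<forall>l\<in>{i..k}. is_diag (D l)"
  shows "axis p 1 \<in> joint_eigsp k D i (\<lambda>l. D l $ p $ p)"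
  using assms by (auto simp: joint_eigsp_diag axis_def)

lemma is_joint_eigval_diag:
  assumes "\<forall>l\<in>{i..k}. is_diag (D l)"
  shows "is_joint_eigval k D i (\<lambda>l. D l $ p $ p)"
  unfolding is_joint_eigval_def
proof
  assume "joint_eigsp k D i (\<lambda>l. D l $ p $ p) = {0}"
  then show False
    using axis_mem_joint_eigsp_diag[OF assms, of p] by (simp add: axis_eq_0_iff)
qed

lemma joint_eigspaces_diag:
  assumes "\<forall>l\<in>{i..k}. is_diag (D l)"
  shows "E \<in> joint_eigspaces k D i \<longleftrightarrow>
    (\<exists>p. E = {v. \<forall>q. v $ q \<noteq> 0 \<longrightarrow> (\<forall>l\<in>{i..k}. D l $ q $ q = D l $ p $ p)})"
proof
  assume "E \<in> joint_eigspaces k D i"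
  then obtain lam where E: "E = joint_eigsp k D i lam" and "E \<noteq> {0}"
    unfolding joint_eigspaces_def by auto
  moreover have "0 \<in> E" unfolding E joint_eigsp_diag[OF assms] by simp
  ultimately obtain v where "v \<in> E" "v \<noteq> 0" by blast
  then obtain p where "v $ p \<noteq> 0" by (auto simp: vec_eq_iff)
  then have "\<forall>l\<in>{i..k}. D l $ p $ p = lam l"
    using \<open>v \<in> E\<close> unfolding E joint_eigsp_diag[OF assms] by blast
  then show "\<exists>p. E = {v. \<forall>q. v $ q \<noteq> 0 \<longrightarrow> (\<forall>l\<in>{i..k}. D l $ q $ q = D l $ p $ p)}"
    by (intro exI[of _ p]) (auto simp: E joint_eigsp_diag[OF assms])
next
  assume "\<exists>p. E = {v. \<forall>q. v $ q \<noteq> 0 \<longrightarrow> (\<forall>l\<in>{i..k}. D l $ q $ q = D l $ p $ p)}"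
  then obtain p where "E = {v. \<forall>q. v $ q \<noteq> 0 \<longrightarrow> (\<forall>l\<in>{i..k}. D l $ q $ q = D l $ p $ p)}" ..
  then have "E = joint_eigsp k D i (\<lambda>l. D l $ p $ p)"
    by (auto simp: joint_eigsp_diag[OF assms])
  then show "E \<in> joint_eigspaces k D i"
    using is_joint_eigval_diag[OF assms, of p]
    unfolding joint_eigspaces_def is_joint_eigval_def by blast
qed

lemma joint_eigspaces_diag_eqI:
  assumes "\<forall>l\<in>{i..k}. is_diag (D l)" and "\<forall>l\<in>{i'..k'}. is_diag (D' l)"
    and "\<And>p q. (\<forall>l\<in>{i..k}. D l $ p $ p = D l $ q $ q) \<longleftrightarrow> (\<forall>l\<in>{i'..k'}. D' l $ p $ p = D' l $ q $ q)"
  shows "joint_eigspaces k D i = joint_eigspaces k' D' i'"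
  using assms(3) by (auto simp: joint_eigspaces_diag[OF assms(1)] joint_eigspaces_diag[OF assms(2)])

lemma joint_eigspaces_subspace:
  assumes "E \<in> joint_eigspaces k D i"
  shows "vec.subspace E"
proof -
  obtain lam where "E = joint_eigsp k D i lam"
    using assms unfolding joint_eigspaces_def by blast
  then show ?thesis
    unfolding vec.subspace_def joint_eigsp_def
    by (auto simp: matrix_vector_right_distrib vector_scalar_commute vector_add_ldistrib)
qed

lemma joint_eigspaces_ex_nonzero:
  assumes "E \<in> joint_eigspaces k D i"
  obtains w where "w \<in> E" "w \<noteq> 0"
proof -
  have "E \<noteq> {0}" using assms unfolding joint_eigspaces_def by blast
  moreover have "0 \<in> E" using joint_eigspaces_subspace[OF assms] by (rule vec.subspace_0)
  ultimately show ?thesis using that by blast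
qed

lemma signature_seq_zero:
  assumes "w \<in> W" "w \<noteq> 0"
  shows "signature_seq (0::'n::finite cmat) W = [vec.dim W]"
proof -
  have "nil_index (0::'n cmat) W = 1"
    unfolding nil_index_def
  proof (rule Least_equality)
    fix d assume "\<forall>v\<in>W. (((*v) (0::'n cmat)) ^^ d) v = 0"
    then show "1 \<le> d" using assms by (cases d) auto
  qed simp
  then show ?thesis unfolding signature_seq_def by simp
qed

lemma alpha_star_eq:
  assumes "i \<le> t" "t \<le> k" "lam t \<noteq> mu t" "\<forall>l\<in>{t<..k}. lam l = mu l"
  shows "alpha_star k i lam mu x = (\<Sum>l=i..t. (lam l - mu l) * (\<Prod>nu\<in>{l<..t}. x i - x nu))"
proof -
  have "Max {l\<in>{i..k}. lam l \<noteq> mu l} = t"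
    using assms by (intro Max_eqI) (auto simp: not_le[symmetric])
  then show ?thesis unfolding alpha_star_def Let_def by simp
qed

lemma alpha_star_diag_nonzero:
  assumes "x \<in> D_set k S" "\<forall>l\<le>k. is_diag (S l)" "i < k"
    and "\<exists>l\<in>{i..k}. S l $ p $ p \<noteq> S l $ q $ q"
  shows "alpha_star k i (\<lambda>l. S l $ p $ p) (\<lambda>l. S l $ q $ q) x \<noteq> 0"
  using assms is_joint_eigval_diag[of i k S] unfolding D_set_def by auto

lemma obtain_last_difference:
  fixes f g :: "nat \<Rightarrow> 'a"
  assumes "l \<in> {a..k}" and "f l \<noteq> g l"
  obtains t where "t \<in> {a..k}" "f t \<noteq> g t" "\<forall>l\<in>{t<..k}. f l = g l"
proof -
  let ?T = "{l \<in> {a..k}. f l \<noteq> g l}"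
  have fin: "finite ?T" and "l \<in> ?T" using assms by auto
  then have "Max ?T \<in> ?T" by (intro Max_in) auto
  moreover have "\<forall>l\<in>?T. l \<le> Max ?T" using fin by simp
  moreover have "\<forall>l\<in>{Max ?T<..k}. f l = g l"
    using calculation by (metis (mono_tags, lifting) atLeastAtMost_iff greaterThanAtMost_iff
        leD less_imp_le mem_Collect_eq order_trans)
  ultimately show ?thesis using that by blast
qed

section \<open>Composed refinement maps\<close>

lemma span_UN_span: "vec.span (\<Union>x\<in>X. vec.span (F x)) = vec.span (\<Union>x\<in>X. F x)"
proof (rule antisym)
  show "vec.span (\<Union>x\<in>X. vec.span (F x)) \<subseteq> vec.span (\<Union>x\<in>X. F x)"
    by (rule vec.span_minimal) (auto intro: vec.span_mono[THEN subsetD])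
  show "vec.span (\<Union>x\<in>X. F x) \<subseteq> vec.span (\<Union>x\<in>X. vec.span (F x))"
    by (rule vec.span_mono) (auto intro: vec.span_superset[THEN subsetD])
qed

lemma span_UN_compose:
  assumes W: "\<forall>mu'<b. W mu' = vec.span (\<Union>mu\<in>{mu. mu < a \<and> f mu = mu'}. V mu)"
    and f: "\<forall>mu<a. f mu < b"
  shows "vec.span (\<Union>mu'\<in>{mu'. mu' < b \<and> g mu' = j}. W mu') =
    vec.span (\<Union>mu\<in>{mu. mu < a \<and> g (f mu) = j}. V mu)"
proof -
  have "vec.span (\<Union>mu'\<in>{mu'. mu' < b \<and> g mu' = j}. W mu') =
      vec.span (\<Union>mu'\<in>{mu'. mu' < b \<and> g mu' = j}. vec.span (\<Union>mu\<in>{mu. mu < a \<and> f mu = mu'}. V mu))"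
    by (intro arg_cong[where f = vec.span] SUP_cong refl) (use W in blast)
  also have "\<dots> = vec.span (\<Union>mu'\<in>{mu'. mu' < b \<and> g mu' = j}. \<Union>mu\<in>{mu. mu < a \<and> f mu = mu'}. V mu)"
    by (rule span_UN_span)
  also have "(\<Union>mu'\<in>{mu'. mu' < b \<and> g mu' = j}. \<Union>mu\<in>{mu. mu < a \<and> f mu = mu'}. V mu) =
      (\<Union>mu\<in>{mu. mu < a \<and> g (f mu) = j}. V mu)"
    using f by blast
  finally show ?thesis .
qed

lemma refinement_phi_comp:
  fixes V :: "nat \<Rightarrow> nat \<Rightarrow> (complex^'n::finite) set"
  assumes subsp: "\<forall>i\<le>k. \<forall>j<length (m i). vec.subspace (V i j)"
    and refine: "\<forall>i<k. (\<forall>mu<length (m i). phi i mu < length (m (Suc i))) \<and>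
             (\<forall>j<length (m (Suc i)).
                V (Suc i) j = vec.span (\<Union>mu\<in>{mu. mu < length (m i) \<and> phi i mu = j}. V i mu))"
    and "i + d \<le> k"
  shows "(\<forall>mu<length (m i). phi_comp phi i d mu < length (m (i + d))) \<and>
     (\<forall>j<length (m (i + d)). V (i + d) j =
        vec.span (\<Union>mu\<in>{mu. mu < length (m i) \<and> phi_comp phi i d mu = j}. V i mu))"
  using \<open>i + d \<le> k\<close>
proof (induction d)
  case 0
  have "V i j = vec.span (\<Union>mu\<in>{mu. mu < length (m i) \<and> mu = j}. V i mu)" if "j < length (m i)" for j
  proof -
    have "(\<Union>mu\<in>{mu. mu < length (m i) \<and> mu = j}. V i mu) = V i j" using that by auto
    moreover have "vec.subspace (V i j)" using subsp that 0 by simp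
    ultimately show ?thesis by (simp only: vec.span_eq_iff[symmetric])
  qed
  then show ?case by simp
next
  case (Suc d)
  then have len: "\<forall>mu<length (m i). phi_comp phi i d mu < length (m (i + d))"
    and span: "\<forall>j<length (m (i + d)). V (i + d) j =
        vec.span (\<Union>mu\<in>{mu. mu < length (m i) \<and> phi_comp phi i d mu = j}. V i mu)"
    by auto
  have len': "\<forall>mu<length (m (i + d)). phi (i + d) mu < length (m (i + Suc d))"
    and span': "\<forall>j<length (m (i + Suc d)). V (i + Suc d) j =
         vec.span (\<Union>mu\<in>{mu. mu < length (m (i + d)) \<and> phi (i + d) mu = j}. V (i + d) mu)"
    using refine Suc.prems by auto
  have "phi_comp phi i (Suc d) mu < length (m (i + Suc d))" if "mu < length (m i)" for mu
    using len len' that by simp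
  moreover have "V (i + Suc d) j =
      vec.span (\<Union>mu\<in>{mu. mu < length (m i) \<and> phi_comp phi i (Suc d) mu = j}. V i mu)"
    if "j < length (m (i + Suc d))" for j
    using span' that span_UN_compose[OF span len, of "phi (i + d)" j] by simp
  ultimately show ?case by blast
qed

lemma refinement_phi_comp_diff:
  fixes V :: "nat \<Rightarrow> nat \<Rightarrow> (complex^'n::finite) set"
  assumes subsp: "\<forall>i\<le>k. \<forall>j<length (m i). vec.subspace (V i j)"
    and refine: "\<forall>i<k. (\<forall>mu<length (m i). phi i mu < length (m (Suc i))) \<and>
             (\<forall>j<length (m (Suc i)).
                V (Suc i) j = vec.span (\<Union>mu\<in>{mu. mu < length (m i) \<and> phi i mu = j}. V i mu))"
    and "i \<le> i'" "i' \<le> k"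
  shows "(\<forall>mu<length (m i). phi_comp phi i (i' - i) mu < length (m i')) \<and>
     (\<forall>j<length (m i'). V i' j =
        vec.span (\<Union>mu\<in>{mu. mu < length (m i) \<and> phi_comp phi i (i' - i) mu = j}. V i mu))"
proof -
  have sum_eq: "i + (i' - i) = i'" using \<open>i \<le> i'\<close> by simp
  then have "i + (i' - i) \<le> k" using \<open>i' \<le> k\<close> by simp
  from refinement_phi_comp[OF subsp refine this] show ?thesis by (simp only: sum_eq)
qed

section \<open>Blocks of a partition\<close>

lemma Suc_le_card_if_sorted_list_of_set_nth_le:
  fixes J :: "nat set"
  assumes fin: "finite J" and nu: "nu < card J" and le: "sorted_list_of_set J ! nu \<le> l"
  shows "Suc nu \<le> card {mu \<in> J. mu \<le> l}"
proof -
  let ?s = "sorted_list_of_set J"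
  have len: "length ?s = card J" and set: "set ?s = J" using fin by auto
  have "(\<lambda>a. ?s ! a) ` {..nu} \<subseteq> {mu \<in> J. mu \<le> l}"
    using sorted_nth_mono[of ?s] nth_mem[of _ ?s] len set nu le by (auto intro: order.trans)
  then have "card ((\<lambda>a. ?s ! a) ` {..nu}) \<le> card {mu \<in> J. mu \<le> l}"
    by (rule card_mono[rotated]) (simp add: fin)
  moreover have "inj_on (\<lambda>a. ?s ! a) {..nu}"
    using fin nu by (auto simp: inj_on_def nth_eq_iff_index_eq)
  ultimately show ?thesis by (simp add: card_image)
qed

lemma sorted_list_of_set_nth_le_if_Suc_le_card:
  fixes J :: "nat set"
  assumes fin: "finite J" and card: "Suc nu \<le> card {mu \<in> J. mu \<le> l}"
  shows "sorted_list_of_set J ! nu \<le> l"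
proof (rule ccontr)
  let ?s = "sorted_list_of_set J"
  assume gt: "\<not> ?s ! nu \<le> l"
  have "{mu \<in> J. mu \<le> l} \<subseteq> (\<lambda>a. ?s ! a) ` {..<nu}"
  proof
    fix mu assume "mu \<in> {mu \<in> J. mu \<le> l}"
    then have "mu \<in> set ?s" "mu \<le> l" using fin by auto
    moreover have "length ?s = card J" by simp
    ultimately obtain a where a: "a < card J" "?s ! a = mu" "mu \<le> l"
      by (metis in_set_conv_nth)
    have "a < nu"
    proof (rule ccontr)
      assume "\<not> a < nu"
      then have "?s ! nu \<le> ?s ! a" using sorted_nth_mono[of ?s] a(1) fin by simp
      then show False using a gt by simp
    qed
    then show "mu \<in> (\<lambda>a. ?s ! a) ` {..<nu}" using a by auto
  qed
  then have "card {mu \<in> J. mu \<le> l} \<le> card ((\<lambda>a. ?s ! a) ` {..<nu})"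
    by (rule card_mono[rotated]) simp
  also have "\<dots> \<le> nu"
    using card_image_le[of "{..<nu}" "\<lambda>a. ?s ! a"] by simp
  finally show False using card by simp
qed

lemma sorted_list_of_set_nth_le_iff:
  fixes J :: "nat set"
  assumes "finite J" and "nu < card J"
  shows "sorted_list_of_set J ! nu \<le> l \<longleftrightarrow> Suc nu \<le> card {mu \<in> J. mu \<le> l}"
  using assms Suc_le_card_if_sorted_list_of_set_nth_le sorted_list_of_set_nth_le_if_Suc_le_card
  by blast

lemma iota_eq:
  assumes "is_partition k r I" and "l \<le> r" and "mu \<in> I l"
  shows "iota r I c mu = c l"
proof -
  have "(THE l'. l' \<le> r \<and> mu \<in> I l') = l"
    using assms unfolding is_partition_def by (intro the_equality) blast+
  then show ?thesis unfolding iota_def by simp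
qed

section \<open>One block of the unfolded normal form\<close>

locale unfolding_block =
  fixes k r :: nat and S :: "nat \<Rightarrow> 'n::finite cmat" and N :: "'n cmat"
    and I :: "nat \<Rightarrow> nat set" and c :: "nat \<Rightarrow> complex"
    and A :: "nat \<Rightarrow> nat \<Rightarrow> 'n cmat" and j :: nat
  assumes nf: "htl_nf k S N"
    and part: "is_partition k r I" and zero_in: "0 \<in> I 0"
    and distinct: "inj_on c {0..r}"
    and genD: "iota r I c \<in> D_set k S"
    and pfd: "\<And>z. (\<forall>j\<le>r. z \<noteq> c j) \<Longrightarrow>
        unfold_coeff k S N (iota r I c) z =
          (\<Sum>j\<le>r. \<Sum>nu\<le>blk_k I j. mat (1 / (z - c j) ^ (nu + 1)) ** A j nu)"
    and j_le: "j \<le> r"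
begin

abbreviation pord :: "nat \<Rightarrow> nat" where
  "pord l \<equiv> pole_order (iota r I c) (c j) l"

abbreviation cof :: "nat \<Rightarrow> complex" where
  "cof l \<equiv> cofactor (iota r I c) (c j) l (c j)"

lemma iota_eq_iff: "mu \<le> k \<Longrightarrow> iota r I c mu = c j \<longleftrightarrow> mu \<in> I j"
proof -
  assume "mu \<le> k"
  then have "mu \<in> (\<Union>l\<le>r. I l)"
    using part unfolding is_partition_def by simp
  then obtain l where l: "l \<le> r" "mu \<in> I l" by blast
  have "c l = c j \<longleftrightarrow> l = j"
    using distinct l(1) j_le by (auto simp: atLeast0AtMost dest: inj_onD)
  moreover have "l = j \<longleftrightarrow> mu \<in> I j"
    using part l j_le unfolding is_partition_def by blast
  ultimately show ?thesis using iota_eq[OF part l] by simp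
qed

lemma iota_0_iff: "iota r I c 0 = c j \<longleftrightarrow> j = 0"
  using iota_eq_iff[of 0] part zero_in j_le unfolding is_partition_def by blast

lemma block_subset: "I j \<subseteq> {0..k}"
  using part j_le unfolding is_partition_def by blast

lemma finite_block: "finite (I j)"
  using block_subset finite_subset by blast

lemma card_block: "card (I j) = Suc (blk_k I j)"
proof -
  have "I j \<noteq> {}" using part j_le unfolding is_partition_def by blast
  then have "card (I j) > 0" using finite_block by (simp add: card_gt_0_iff)
  then show ?thesis by (simp add: blk_k_def)
qed

lemma pord_eq_card: "l \<le> k \<Longrightarrow> pord l = card {mu \<in> I j. mu \<le> l}"
  unfolding pole_order_def
  by (rule arg_cong[where f = card]) (use iota_eq_iff block_subset in force)

lemma blk_idx_le_iff: "nu \<le> blk_k I j \<Longrightarrow> l \<le> k \<Longrightarrow> blk_idx I j nu \<le> l \<longleftrightarrow> Suc nu \<le> pord l"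
  unfolding blk_idx_def pord_eq_card
  by (rule sorted_list_of_set_nth_le_iff[OF finite_block]) (simp add: card_block)

lemma blk_idx_mem: "nu \<le> blk_k I j \<Longrightarrow> blk_idx I j nu \<in> I j"
  using nth_mem[of nu "sorted_list_of_set (I j)"] finite_block card_block
  by (simp add: blk_idx_def)

lemma blk_idx_le: "nu \<le> blk_k I j \<Longrightarrow> blk_idx I j nu \<le> k"
  using blk_idx_mem block_subset by (meson atLeastAtMost_iff subsetD)

lemma pord_blk_idx: "nu \<le> blk_k I j \<Longrightarrow> Suc nu \<le> pord (blk_idx I j nu)"
  using blk_idx_le_iff blk_idx_le by blast

lemma pord_le: "l \<le> k \<Longrightarrow> pord l \<le> Suc (blk_k I j)"
  unfolding pord_eq_card card_block[symmetric]
  by (rule card_mono[OF finite_block]) auto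

lemma blk_idx_mono: "a \<le> b \<Longrightarrow> b \<le> blk_k I j \<Longrightarrow> blk_idx I j a \<le> blk_idx I j b"
  using blk_idx_le_iff[of a "blk_idx I j b"] pord_blk_idx[of b] blk_idx_le[of b] by simp

lemma blk_idx_0:
  assumes "j = 0"
  shows "blk_idx I j 0 = 0"
proof -
  have "{mu \<in> I j. mu \<le> 0} = {0}" using zero_in assms by auto
  then have "Suc 0 \<le> pord 0" using pord_eq_card[of 0] by simp
  then show ?thesis using blk_idx_le_iff[of 0 0] by simp
qed

(* The S' and N' of the theorem: N_0 dz / (z - c_0) only contributes to the block at c_0. *)
definition block_nil :: "'n cmat" where
  "block_nil = (if j = 0 then N else 0)"

definition block_S :: "nat \<Rightarrow> 'n cmat" where
  "block_S nu = (if nu = 0 then A j 0 - block_nil else A j nu)"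

(* A scalar instance of pfd, such as one matrix entry of it or the difference of two entries. *)
definition scalar_pfd :: "(nat \<Rightarrow> complex) \<Rightarrow> complex \<Rightarrow> (nat \<Rightarrow> nat \<Rightarrow> complex) \<Rightarrow> bool" where
  "scalar_pfd d dN b \<longleftrightarrow> (\<forall>z. (\<forall>j'\<le>r. z \<noteq> c j') \<longrightarrow>
     unfold_scalar k (iota r I c) d dN z = principal_parts r (blk_k I) c b z)"

definition reduced_coeff :: "(nat \<Rightarrow> nat \<Rightarrow> complex) \<Rightarrow> complex \<Rightarrow> nat \<Rightarrow> complex" where
  "reduced_coeff b dN nu = b j nu - (if j = 0 \<and> nu = 0 then dN else 0)"

lemma scalar_pfd_entry: "scalar_pfd (\<lambda>l. S l $ p $ q) (N $ p $ q) (\<lambda>j nu. A j nu $ p $ q)"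
  unfolding scalar_pfd_def
proof (intro allI impI)
  fix z assume "\<forall>j'\<le>r. z \<noteq> c j'"
  then have "unfold_coeff k S N (iota r I c) z $ p $ q =
      (\<Sum>j\<le>r. \<Sum>nu\<le>blk_k I j. mat (1 / (z - c j) ^ (nu + 1)) ** A j nu) $ p $ q"
    using pfd by simp
  then show "unfold_scalar k (iota r I c) (\<lambda>l. S l $ p $ q) (N $ p $ q) z =
      principal_parts r (blk_k I) c (\<lambda>j nu. A j nu $ p $ q) z"
    by (simp add: unfold_coeff_def unfold_scalar_def principal_parts_def mat_mult_nth)
qed

lemma scalar_pfd_diff:
  assumes "scalar_pfd d dN b" and "scalar_pfd d' dN' b'"
  shows "scalar_pfd (\<lambda>l. d l - d' l) (dN - dN') (\<lambda>j nu. b j nu - b' j nu)"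
  using assms by (simp add: scalar_pfd_def unfold_scalar_diff principal_parts_diff)

lemma reduced_coeff_entry: "reduced_coeff (\<lambda>j nu. A j nu $ p $ q) (N $ p $ q) nu = block_S nu $ p $ q"
  unfolding reduced_coeff_def block_S_def block_nil_def by simp

lemma reduced_coeff_diff:
  "reduced_coeff (\<lambda>j nu. b j nu - b' j nu) (dN - dN') nu = reduced_coeff b dN nu - reduced_coeff b' dN' nu"
  by (simp add: reduced_coeff_def)

lemma reduced_coeff_eq:
  assumes "scalar_pfd d dN b" and "m \<le> blk_k I j"
    and "\<forall>nu. m < nu \<and> nu \<le> blk_k I j \<longrightarrow> b j nu = 0"
    and "\<forall>l\<le>k. Suc m < pord l \<longrightarrow> d l = 0"
  shows "reduced_coeff b dN m = (\<Sum>l\<le>k. if pord l = Suc m then d l / cof l else 0)"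
proof -
  have "inj_on c {..r}" using distinct by (simp add: atLeast0AtMost)
  then show ?thesis
    using principal_part_coeff[of c r j k "iota r I c" d dN "blk_k I" b m] assms j_le
    by (simp add: scalar_pfd_def reduced_coeff_def iota_0_iff)
qed

(* Downward induction: the coefficient of order m + 1 is read off once the higher ones vanish. *)
lemma reduced_coeff_vanish:
  assumes pf: "scalar_pfd d dN b" and nu: "nu \<le> blk_k I j"
    and d: "\<forall>l\<in>{blk_idx I j nu..k}. d l = 0" and m: "nu \<le> m" "m \<le> blk_k I j"
  shows "reduced_coeff b dN m = 0"
proof -
  have d': "d l = 0" if "l \<le> k" "Suc nu \<le> pord l" for l
    using d blk_idx_le_iff[OF nu] that by auto
  have "m \<le> Suc (blk_k I j)" using m by simp
  then have "\<forall>mu\<in>{m..blk_k I j}. reduced_coeff b dN mu = 0"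
  proof (induction rule: inc_induct)
    case (step n)
    have "\<forall>mu. n < mu \<and> mu \<le> blk_k I j \<longrightarrow> b j mu = 0"
      using step.IH by (auto simp: reduced_coeff_def)
    moreover have "\<forall>l\<le>k. Suc n < pord l \<longrightarrow> d l = 0"
      using d' m(1) step.hyps(1) by auto
    ultimately have "reduced_coeff b dN n = (\<Sum>l\<le>k. if pord l = Suc n then d l / cof l else 0)"
      using reduced_coeff_eq[OF pf] step.hyps(2) by simp
    also have "\<dots> = 0"
      using d' m(1) step.hyps(1) by (intro sum.neutral) auto
    finally have "reduced_coeff b dN n = 0" .
    then show ?case
      using step.IH by (metis atLeastAtMost_iff le_antisym not_less_eq_eq)
  qed simp
  then show ?thesis using m by simp
qed

lemma block_S_offdiag:
  assumes "p \<noteq> q" and "nu \<le> blk_k I j"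
  shows "block_S nu $ p $ q = 0"
proof -
  have "\<forall>l\<le>k. S l $ p $ q = 0"
    using nf assms(1) by (simp add: htl_nf_def is_diag_def)
  then show ?thesis
    using reduced_coeff_vanish[OF scalar_pfd_entry, where nu = 0 and m = nu] assms(2)
    by (simp add: reduced_coeff_entry)
qed

lemma block_S_diag: "nu \<le> blk_k I j \<Longrightarrow> is_diag (block_S nu)"
  using block_S_offdiag by (simp add: is_diag_def)

lemma reduced_coeff_top:
  assumes pf: "scalar_pfd d dN b" and t: "t \<le> k" "blk_idx I j 0 \<le> t"
    and after: "\<forall>l\<in>{t<..k}. d l = 0"
  shows "reduced_coeff b dN (pord t - 1) = (\<Sum>l = blk_idx I j (pord t - 1)..t. d l / cof l)"
proof -
  define m where "m = pord t - 1"
  have "Suc 0 \<le> pord t" using blk_idx_le_iff[of 0 t] t by simp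
  then have Suc_m: "Suc m = pord t" and m: "m \<le> blk_k I j"
    using pord_le[OF t(1)] by (auto simp: m_def)
  have beyond: "t < l" if "Suc m < pord l" for l
    using pole_order_mono[of l t "iota r I c" "c j"] that Suc_m by (cases "l \<le> t") auto
  have "b j nu = 0" if nu: "m < nu" "nu \<le> blk_k I j" for nu
  proof -
    have "\<forall>l\<in>{blk_idx I j (Suc m)..k}. d l = 0"
      using blk_idx_le_iff[of "Suc m"] nu beyond after by auto
    then have "reduced_coeff b dN nu = 0"
      using reduced_coeff_vanish[OF pf, of "Suc m" nu] nu by simp
    then show ?thesis using nu by (simp add: reduced_coeff_def)
  qed
  then have "reduced_coeff b dN m = (\<Sum>l\<le>k. if pord l = Suc m then d l / cof l else 0)"
    using reduced_coeff_eq[OF pf m] beyond after by auto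
  also have "\<dots> = (\<Sum>l = blk_idx I j m..t. d l / cof l)"
  proof (rule sum.mono_neutral_cong_right)
    show "{blk_idx I j m..t} \<subseteq> {..k}" using t by auto
    show "\<forall>l\<in>{..k} - {blk_idx I j m..t}. (if pord l = Suc m then d l / cof l else 0) = 0"
      using blk_idx_le_iff[OF m] after by auto
    show "(if pord l = Suc m then d l / cof l else 0) = d l / cof l" if "l \<in> {blk_idx I j m..t}" for l
      using that blk_idx_le_iff[OF m, of l] pole_order_mono[of l t "iota r I c" "c j"] Suc_m t by auto
  qed simp
  finally show ?thesis by (simp add: m_def)
qed

(* Multiplied by cof t, this sum becomes an alpha_star value at level i: here genD is used. *)
lemma block_diag_sum_nonzero:
  assumes i: "i \<in> I j" "i \<le> t" and t: "t \<le> k"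
    and no_pole: "\<forall>nu\<in>{i<..t}. iota r I c nu \<noteq> c j"
    and top: "S t $ p $ p \<noteq> S t $ q $ q" "\<forall>l\<in>{t<..k}. S l $ p $ p = S l $ q $ q"
  shows "(\<Sum>l = i..t. (S l $ p $ p - S l $ q $ q) / cof l) \<noteq> 0"
proof (cases "i < k")
  case True
  have "iota r I c i = c j" using iota_eq_iff i t by simp
  then have "cofactor (iota r I c) (c j) t (c j) * (\<Sum>l = i..t. (S l $ p $ p - S l $ q $ q) / cof l) =
      alpha_star k i (\<lambda>l. S l $ p $ p) (\<lambda>l. S l $ q $ q) (iota r I c)"
    using cofactor_mult_sum[OF i(2) no_pole] alpha_star_eq[OF i(2) t top] by simp
  moreover have "alpha_star k i (\<lambda>l. S l $ p $ p) (\<lambda>l. S l $ q $ q) (iota r I c) \<noteq> 0"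
  proof (rule alpha_star_diag_nonzero[OF genD _ True])
    show "\<forall>l\<le>k. is_diag (S l)" using nf by (simp add: htl_nf_def)
    show "\<exists>l\<in>{i..k}. S l $ p $ p \<noteq> S l $ q $ q" using i t top(1) by auto
  qed
  ultimately show ?thesis by auto
next
  case False
  then have "i = t" "t = k" using i t by auto
  then show ?thesis using top(1) cofactor_nonzero by simp
qed

lemma block_eigval_of_reduced:
  assumes nu: "nu \<le> blk_k I j" and eq: "\<forall>m\<in>{nu..blk_k I j}. block_S m $ p $ p = block_S m $ q $ q"
  shows "\<forall>l\<in>{blk_idx I j nu..k}. S l $ p $ p = S l $ q $ q"
proof (rule ccontr)
  assume "\<not> ?thesis"
  then obtain l where "l \<in> {blk_idx I j nu..k}" "S l $ p $ p \<noteq> S l $ q $ q" by blast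
  then obtain t where "t \<in> {blk_idx I j nu..k}" "S t $ p $ p \<noteq> S t $ q $ q"
    and after: "\<forall>l\<in>{t<..k}. S l $ p $ p = S l $ q $ q"
    by (rule obtain_last_difference)
  then have t: "blk_idx I j nu \<le> t" "t \<le> k" "S t $ p $ p \<noteq> S t $ q $ q" by auto
  define m where "m = pord t - 1"
  have Suc_m: "Suc m = pord t" and m: "nu \<le> m" "m \<le> blk_k I j"
    using blk_idx_le_iff[OF nu t(2)] t(1) pord_le[OF t(2)] by (auto simp: m_def)
  have pf: "scalar_pfd (\<lambda>l. S l $ p $ p - S l $ q $ q) (N $ p $ p - N $ q $ q)
      (\<lambda>j nu. A j nu $ p $ p - A j nu $ q $ q)"
    by (rule scalar_pfd_diff[OF scalar_pfd_entry scalar_pfd_entry])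
  have "(\<Sum>l = blk_idx I j m..t. (S l $ p $ p - S l $ q $ q) / cof l) =
      block_S m $ p $ p - block_S m $ q $ q"
    using reduced_coeff_top[OF pf t(2)] blk_idx_mono[of 0 nu] nu t(1) after
    by (simp add: m_def reduced_coeff_diff reduced_coeff_entry)
  also have "\<dots> = 0" using eq m by simp
  finally have "(\<Sum>l = blk_idx I j m..t. (S l $ p $ p - S l $ q $ q) / cof l) = 0" .
  moreover have "(\<Sum>l = blk_idx I j m..t. (S l $ p $ p - S l $ q $ q) / cof l) \<noteq> 0"
  proof (rule block_diag_sum_nonzero)
    show "blk_idx I j m \<in> I j" using blk_idx_mem m by simp
    show "blk_idx I j m \<le> t" using blk_idx_le_iff[OF m(2) t(2)] Suc_m by simp
    show "\<forall>mu\<in>{blk_idx I j m<..t}. iota r I c mu \<noteq> c j"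
      using no_pole_between pord_blk_idx[OF m(2)] Suc_m by auto
  qed (use t after in auto)
  ultimately show False by simp
qed

lemma block_eigval_iff:
  assumes "nu \<le> blk_k I j"
  shows "(\<forall>l\<in>{blk_idx I j nu..k}. S l $ p $ p = S l $ q $ q) \<longleftrightarrow>
    (\<forall>m\<in>{nu..blk_k I j}. block_S m $ p $ p = block_S m $ q $ q)"
proof
  assume "\<forall>l\<in>{blk_idx I j nu..k}. S l $ p $ p = S l $ q $ q"
  then show "\<forall>m\<in>{nu..blk_k I j}. block_S m $ p $ p = block_S m $ q $ q"
    using reduced_coeff_vanish[OF scalar_pfd_diff[OF scalar_pfd_entry scalar_pfd_entry] assms]
    by (simp add: reduced_coeff_diff reduced_coeff_entry)
qed (rule block_eigval_of_reduced[OF assms])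

lemma block_commute:
  assumes nu: "nu \<le> blk_k I j"
  shows "block_S nu ** block_nil = block_nil ** block_S nu"
proof (cases "j = 0")
  case False
  then show ?thesis unfolding block_nil_def by simp
next
  case True
  have "block_S nu $ p $ p = block_S nu $ q $ q" if Npq: "N $ p $ q \<noteq> 0" for p q
  proof -
    have "S l $ p $ p = S l $ q $ q" if "l \<le> k" for l
    proof -
      have "is_diag (S l)" and "(S l ** N) $ p $ q = (N ** S l) $ p $ q"
        using nf that by (auto simp: htl_nf_def)
      then show ?thesis using Npq by (simp add: diag_mult_nth mult_diag_nth)
    qed
    then have "\<forall>m\<in>{0..blk_k I j}. block_S m $ p $ p = block_S m $ q $ q"
      using block_eigval_iff[of 0 p q] by simp
    then show ?thesis using nu by simp
  qed
  then have "(block_S nu ** N) $ p $ q = (N ** block_S nu) $ p $ q" for p q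
    using block_S_diag[OF nu] by (cases "N $ p $ q = 0") (auto simp: diag_mult_nth mult_diag_nth)
  then show ?thesis unfolding block_nil_def using True by (simp add: vec_eq_iff)
qed

lemma block_htl_nf: "htl_nf (blk_k I j) block_S block_nil"
proof -
  have "mat_nilpotent (0::'n cmat)"
    unfolding mat_nilpotent_def by (rule exI[of _ 1]) simp
  then have "mat_nilpotent block_nil"
    using nf unfolding block_nil_def htl_nf_def by simp
  then show ?thesis
    unfolding htl_nf_def using block_S_diag block_commute by blast
qed

lemma joint_eigspaces_block:
  assumes "nu \<le> blk_k I j"
  shows "joint_eigspaces (blk_k I j) block_S nu = joint_eigspaces k S (blk_idx I j nu)"
  using block_eigval_iff[OF assms, symmetric] block_S_diag nf
  by (intro joint_eigspaces_diag_eqI) (auto simp: htl_nf_def)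

lemma block_has_spectral_type:
  assumes "has_spectral_type k S N m phi sig"
  shows "has_spectral_type (blk_k I j) block_S block_nil (\<lambda>nu. m (blk_idx I j nu))
     (\<lambda>nu. phi_comp phi (blk_idx I j nu) (blk_idx I j (Suc nu) - blk_idx I j nu))
     (if j = 0 then sig else (\<lambda>mu. [m (blk_idx I j 0) ! mu]))"
proof -
  obtain V :: "nat \<Rightarrow> nat \<Rightarrow> (complex^'n) set" where
    levels: "\<forall>i\<le>k. bij_betw (V i) {..<length (m i)} (joint_eigspaces k S i) \<and>
              (\<forall>mu<length (m i). m i ! mu = vec.dim (V i mu))" and
    refine: "\<forall>i<k. (\<forall>mu<length (m i). phi i mu < length (m (Suc i))) \<and>
             (\<forall>mu<length (m (Suc i)).
                V (Suc i) mu = vec.span (\<Union>mu'\<in>{mu'. mu' < length (m i) \<and> phi i mu' = mu}. V i mu'))" and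
    sig: "\<forall>mu<length (m 0). sig mu = signature_seq N (V 0 mu)"
    using assms unfolding has_spectral_type_def by blast
  have V_mem: "V i mu \<in> joint_eigspaces k S i" if "i \<le> k" "mu < length (m i)" for i mu
    using levels that by (auto dest: bij_betwE)
  then have subsp: "\<forall>i\<le>k. \<forall>mu<length (m i). vec.subspace (V i mu)"
    by (blast intro: joint_eigspaces_subspace)
  have block_sig: "(if j = 0 then sig else (\<lambda>mu. [m (blk_idx I j 0) ! mu])) mu =
      signature_seq block_nil (V (blk_idx I j 0) mu)" if mu: "mu < length (m (blk_idx I j 0))" for mu
  proof (cases "j = 0")
    case True
    then show ?thesis using sig mu blk_idx_0 unfolding block_nil_def by simp
  next
    case False
    have i0: "blk_idx I j 0 \<le> k" using blk_idx_le by simp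
    obtain w where "w \<in> V (blk_idx I j 0) mu" "w \<noteq> 0"
      using joint_eigspaces_ex_nonzero[OF V_mem[OF i0 mu]] .
    then have "signature_seq 0 (V (blk_idx I j 0) mu) = [vec.dim (V (blk_idx I j 0) mu)]"
      by (rule signature_seq_zero)
    then show ?thesis
      using False levels i0 mu unfolding block_nil_def by simp
  qed
  show ?thesis
    unfolding has_spectral_type_def
    using levels blk_idx_le joint_eigspaces_block block_sig
      refinement_phi_comp_diff[OF subsp refine blk_idx_mono blk_idx_le]
    by (intro exI[of _ "\<lambda>nu. V (blk_idx I j nu)"]) simp
qed

end

theorem mainTheorem2:
  fixes k r :: nat and S :: "nat \<Rightarrow> 'n::finite cmat" and N :: "'n cmat"
    and I :: "nat \<Rightarrow> nat set" and c :: "nat \<Rightarrow> complex"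
    and A :: "nat \<Rightarrow> nat \<Rightarrow> 'n cmat"
  assumes nf: "htl_nf k S N"
    and part: "is_partition k r I" and zero_in: "0 \<in> I 0"
    and distinct: "inj_on c {0..r}"
    and genD: "iota r I c \<in> D_set k S"
    and pfd: "\<And>z. (\<forall>j\<le>r. z \<noteq> c j) \<Longrightarrow>
        unfold_coeff k S N (iota r I c) z =
          (\<Sum>j\<le>r. \<Sum>nu\<le>blk_k I j. mat (1 / (z - c j) ^ (nu + 1)) ** A j nu)"
    and j_le: "j \<le> r"
  shows "\<exists>S' N'. S' 0 + N' = A j 0 \<and> (\<forall>nu\<in>{1..blk_k I j}. S' nu = A j nu) \<and>
           htl_nf (blk_k I j) S' N' \<and>
           (\<forall>m phi sig. has_spectral_type k S N m phi sig \<longrightarrow>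
              has_spectral_type (blk_k I j) S' N'
                (\<lambda>nu. m (blk_idx I j nu))
                (\<lambda>nu. phi_comp phi (blk_idx I j nu) (blk_idx I j (Suc nu) - blk_idx I j nu))
                (if j = 0 then sig else (\<lambda>mu. [m (blk_idx I j 0) ! mu])))"
proof -
  interpret unfolding_block k r S N I c A j
    using assms by unfold_locales
  show ?thesis
    using block_htl_nf block_has_spectral_type
    by (intro exI[of _ block_S] exI[of _ block_nil]) (auto simp: block_S_def)
qed

end
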